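(* For every $k$ with $t\le k\le n$, the probability that the reverse reachable set of $B$ has exactly $k$ vertices equals $\alpha_k$, and \[ \alpha_k \le n^x \cdot \max_{\substack{\sum_i k_i = k,\ t_i\le k_i\le a_i}} a_{k_1,\dots,k_x}. \]
   Context: Random graph model: $V$ is a set of $n$ vertices, $B\subseteq V$ a target set with $|B|=t$, each $v\in V$ has a prescribed out-degree $d_v$ with $1\le d_{\min}\le d_v\le d_{\max}$ (constants), and for each $v$ independently its out-neighbour set is chosen uniformly among all $d_v$-element subsets of $V$. Let $d_1,\dots,d_x$ be the distinct out-degrees, $a_i$ the number of vertices of out-degree $d_i$, $t_i$ the number of vertices of $B$ of out-degree $d_i$. The reverse reachable set of $B$ is the set of vertices having a directed path to a vertex of $B$. For $S\supseteq B$ containing $k_i$ vertices of out-degree $d_i$, $R(k_1,\dots,k_x)$ is the probability that every vertex of $S$ has a directed path to $B$ inside $S$. For $k=\sum_i k_i$ with $t_i\le k_i\le a_i$, define $a_{k_1,\dots,k_x}=\left(\prod_{i=1}^x\binom{a_i-t_i}{k_i-t_i}\left(\binom{n-k}{d_i}/\binom{n}{d_i}\right)^{a_i-k_i}\right)R(k_1,\dots,k_x)$, where the factor $(\binom{n-k}{d_i}/\binom{n}{d_i})^{a_i-k_i}$ is taken to be $1$ when $a_i=k_i$, and $\alpha_k=\sum_{\sum_i k_i=k,\ t_i\le k_i\le a_i} a_{k_1,\dots,k_x}$. *)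

theory Defs
  imports "HOL-Probability.Probability"
begin

text \<open>An outcome is a function G assigning to each vertex its out-neighbour set
  (vertices outside V get the empty set).\<close>

definition graph_pmf :: "'a set \<Rightarrow> ('a \<Rightarrow> nat) \<Rightarrow> ('a \<Rightarrow> 'a set) pmf" where
  "graph_pmf V d = Pi_pmf V {} (\<lambda>v. pmf_of_set {N. N \<subseteq> V \<and> card N = d v})"

definition edges_in :: "('a \<Rightarrow> 'a set) \<Rightarrow> 'a set \<Rightarrow> ('a \<times> 'a) set" where
  "edges_in G S = {(u, w). u \<in> S \<and> w \<in> S \<and> w \<in> G u}"

definition rev_reach :: "('a \<Rightarrow> 'a set) \<Rightarrow> 'a set \<Rightarrow> 'a set \<Rightarrow> 'a set" where
  "rev_reach G V B = {v \<in> V. \<exists>b\<in>B. (v, b) \<in> (edges_in G V)\<^sup>*}"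

definition reaches_inside :: "('a \<Rightarrow> 'a set) \<Rightarrow> 'a set \<Rightarrow> 'a set \<Rightarrow> bool" where
  "reaches_inside G S B = (\<forall>v\<in>S. \<exists>b\<in>B. (v, b) \<in> (edges_in G S)\<^sup>*)"

text \<open>The distinct out-degrees are the elements of d ` V; a tuple (k_1,...,k_x)
  is represented by a function kk from degrees to counts.
  cnt_deg A d j = number of vertices of A with out-degree j
  (so a_i = cnt_deg V d d_i and t_i = cnt_deg B d d_i).\<close>
definition cnt_deg :: "'a set \<Rightarrow> ('a \<Rightarrow> nat) \<Rightarrow> nat \<Rightarrow> nat" where
  "cnt_deg A d j = card {v \<in> A. d v = j}"

definition R_prob :: "'a set \<Rightarrow> ('a \<Rightarrow> nat) \<Rightarrow> 'a set \<Rightarrow> (nat \<Rightarrow> nat) \<Rightarrow> real" where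
  "R_prob V d B kk =
    (let S = (SOME S. B \<subseteq> S \<and> S \<subseteq> V \<and> (\<forall>j\<in>d ` V. cnt_deg S d j = kk j))
     in measure_pmf.prob (graph_pmf V d) {G. reaches_inside G S B})"

definition a_coef :: "'a set \<Rightarrow> ('a \<Rightarrow> nat) \<Rightarrow> 'a set \<Rightarrow> (nat \<Rightarrow> nat) \<Rightarrow> real" where
  "a_coef V d B kk =
    (let n = card V; k = sum kk (d ` V) in
     (\<Prod>j\<in>d ` V. real ((cnt_deg V d j - cnt_deg B d j) choose (kk j - cnt_deg B d j))
        * (if cnt_deg V d j = kk j then 1
           else (real ((n - k) choose j) / real (n choose j)) ^ (cnt_deg V d j - kk j)))
     * R_prob V d B kk)"

definition tuples :: "'a set \<Rightarrow> ('a \<Rightarrow> nat) \<Rightarrow> 'a set \<Rightarrow> nat \<Rightarrow> (nat \<Rightarrow> nat) set" where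
  "tuples V d B k = {kk. (\<forall>j\<in>d ` V. cnt_deg B d j \<le> kk j \<and> kk j \<le> cnt_deg V d j)
      \<and> (\<forall>j. j \<notin> d ` V \<longrightarrow> kk j = 0) \<and> sum kk (d ` V) = k}"

definition alpha :: "'a set \<Rightarrow> ('a \<Rightarrow> nat) \<Rightarrow> 'a set \<Rightarrow> nat \<Rightarrow> real" where
  "alpha V d B k = (\<Sum>kk\<in>tuples V d B k. a_coef V d B kk)"

end

theory Submission
  imports Defs "HOL-Combinatorics.Permutations"
begin

text \<open>For \<open>B \<subseteq> S \<subseteq> V\<close>, the reverse reachable set is exactly \<open>S\<close> iff every vertex of \<open>S\<close>
  reaches \<open>B\<close> inside \<open>S\<close> and no vertex of \<open>V - S\<close> has an out-neighbour in \<open>S\<close>. The two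
  events concern the independent out-neighbourhoods of \<open>S\<close> and of \<open>V - S\<close>, and the second
  has probability \<open>\<Prod>w\<in>V - S. C(n - |S|, d w) / C(n, d w)\<close>. A degree-preserving permutation
  of \<open>V\<close> leaves the distribution of the graph invariant, and one such permutation carries
  any \<open>S'\<close> with the same degree profile as \<open>S\<close> onto \<open>S\<close> while mapping \<open>B\<close> onto itself;
  so the first probability depends only on the profile of \<open>S\<close> and is the value \<open>R\<close>.
  Grouping the sets \<open>S\<close> of size \<open>k\<close> by profile and counting each group gives \<open>\<alpha>\<^sub>k\<close>;
  the bound holds because there are at most \<open>n\<^sup>x\<close> admissible profiles.\<close>

section \<open>Reachability\<close>

lemma edges_in_mono: "S \<subseteq> T \<Longrightarrow> edges_in G S \<subseteq> edges_in G T"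
  unfolding edges_in_def by auto

lemma edges_in_cong: "(\<And>u. u \<in> S \<Longrightarrow> G u = H u) \<Longrightarrow> edges_in G S = edges_in H S"
  unfolding edges_in_def by auto

lemma reaches_inside_cong:
  "(\<And>u. u \<in> S \<Longrightarrow> G u = H u) \<Longrightarrow> reaches_inside G S B = reaches_inside H S B"
  unfolding reaches_inside_def using edges_in_cong[of S G H] by simp

lemma rtrancl_edges_in_closed:
  assumes path: "(v, b) \<in> (edges_in G V)\<^sup>*" and "b \<in> S"
    and closed: "\<forall>u\<in>V - S. G u \<inter> S = {}"
  shows "v \<in> S \<and> (v, b) \<in> (edges_in G S)\<^sup>*"
  using path
proof (induction rule: converse_rtrancl_induct)
  case base
  show ?case using \<open>b \<in> S\<close> by simp
next
  case (step u w)
  then have "u \<in> S" using closed by (auto simp: edges_in_def)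
  with step have "(u, w) \<in> edges_in G S" by (auto simp: edges_in_def)
  then show ?case using \<open>u \<in> S\<close> step.IH by (meson converse_rtrancl_into_rtrancl)
qed

lemma rev_reach_eq_iff:
  assumes "B \<subseteq> S" "S \<subseteq> V"
  shows "rev_reach G V B = S \<longleftrightarrow> reaches_inside G S B \<and> (\<forall>w\<in>V - S. G w \<inter> S = {})"
proof
  assume eq: "rev_reach G V B = S"
  have closed: "\<forall>w\<in>V - S. G w \<inter> S = {}"
  proof (intro ballI equals0I)
    fix w u assume w: "w \<in> V - S" and u: "u \<in> G w \<inter> S"
    then obtain b where "b \<in> B" "(u, b) \<in> (edges_in G V)\<^sup>*"
      using eq unfolding rev_reach_def by blast
    moreover have "(w, u) \<in> edges_in G V" using w u assms(2) by (auto simp: edges_in_def)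
    ultimately have "w \<in> rev_reach G V B"
      using w unfolding rev_reach_def by (blast intro: converse_rtrancl_into_rtrancl)
    then show False using w eq by blast
  qed
  have "reaches_inside G S B"
    unfolding reaches_inside_def
  proof
    fix v assume "v \<in> S"
    then obtain b where "b \<in> B" "(v, b) \<in> (edges_in G V)\<^sup>*"
      using eq unfolding rev_reach_def by blast
    then show "\<exists>b\<in>B. (v, b) \<in> (edges_in G S)\<^sup>*"
      using rtrancl_edges_in_closed[of v b G V S] closed assms(1) by blast
  qed
  with closed show "reaches_inside G S B \<and> (\<forall>w\<in>V - S. G w \<inter> S = {})" by blast
next
  assume h: "reaches_inside G S B \<and> (\<forall>w\<in>V - S. G w \<inter> S = {})"
  show "rev_reach G V B = S"
  proof (intro equalityI subsetI)
    fix v assume "v \<in> rev_reach G V B"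
    then obtain b where "b \<in> B" "(v, b) \<in> (edges_in G V)\<^sup>*" unfolding rev_reach_def by blast
    then show "v \<in> S" using rtrancl_edges_in_closed[of v b G V S] h assms(1) by blast
  next
    fix v assume "v \<in> S"
    then obtain b where "b \<in> B" "(v, b) \<in> (edges_in G S)\<^sup>*"
      using h unfolding reaches_inside_def by blast
    moreover have "(edges_in G S)\<^sup>* \<subseteq> (edges_in G V)\<^sup>*"
      using assms(2) by (intro rtrancl_mono edges_in_mono)
    ultimately show "v \<in> rev_reach G V B" using \<open>v \<in> S\<close> assms(2) unfolding rev_reach_def by blast
  qed
qed

lemma measure_card_rev_reach_eq_sum:
  assumes "finite V" "B \<subseteq> V"
  shows "measure_pmf.prob M {G. card (rev_reach G V B) = k}
     = (\<Sum>S\<in>{S. B \<subseteq> S \<and> S \<subseteq> V \<and> card S = k}. measure_pmf.prob M {G. rev_reach G V B = S})"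
proof -
  have fin: "finite {S. B \<subseteq> S \<and> S \<subseteq> V \<and> card S = k}"
    by (rule finite_subset[of _ "Pow V"]) (auto simp: assms(1))
  have "B \<subseteq> rev_reach G V B" "rev_reach G V B \<subseteq> V" for G
    using assms(2) unfolding rev_reach_def by auto
  then have eq: "{G. card (rev_reach G V B) = k}
      = (\<Union>S\<in>{S. B \<subseteq> S \<and> S \<subseteq> V \<and> card S = k}. {G. rev_reach G V B = S})"
    by blast
  show ?thesis unfolding eq
    by (rule measure_pmf.finite_measure_finite_Union) (auto simp: fin disjoint_family_on_def)
qed

section \<open>Counting vertices by degree\<close>

lemma cnt_deg_mono: "finite T \<Longrightarrow> S \<subseteq> T \<Longrightarrow> cnt_deg S d j \<le> cnt_deg T d j"
  unfolding cnt_deg_def by (rule card_mono) auto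

lemma cnt_deg_Diff:
  assumes "finite T" "S \<subseteq> T"
  shows "cnt_deg (T - S) d j = cnt_deg T d j - cnt_deg S d j"
proof -
  have "{v\<in>T - S. d v = j} = {v\<in>T. d v = j} - {v\<in>S. d v = j}" by auto
  moreover have "{v\<in>S. d v = j} \<subseteq> {v\<in>T. d v = j}" using assms(2) by auto
  moreover have "finite {v\<in>S. d v = j}" using finite_subset[OF assms(2,1)] by simp
  ultimately show ?thesis unfolding cnt_deg_def by (simp add: card_Diff_subset)
qed

lemma cnt_deg_eq_0:
  assumes "j \<notin> d ` V" "S \<subseteq> V"
  shows "cnt_deg S d j = 0"
proof -
  have empty: "{v\<in>S. d v = j} = {}" using assms by auto
  show ?thesis unfolding cnt_deg_def empty by simp
qed

lemma cnt_deg_add_le_card: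
  assumes "finite V" "i \<noteq> j"
  shows "cnt_deg V d i + cnt_deg V d j \<le> card V"
proof -
  have "cnt_deg V d i + cnt_deg V d j = card ({x\<in>V. d x = i} \<union> {x\<in>V. d x = j})"
    unfolding cnt_deg_def using assms by (subst card_Un_disjoint) auto
  also have "\<dots> \<le> card V" using assms(1) by (intro card_mono) auto
  finally show ?thesis .
qed

lemma card_eq_sum_cnt_deg:
  assumes "finite V" "S \<subseteq> V"
  shows "card S = (\<Sum>j\<in>d ` V. cnt_deg S d j)"
proof -
  have "(\<Sum>j\<in>d ` V. \<Sum>x\<in>{x\<in>S. d x = j}. 1) = (\<Sum>x\<in>S. 1::nat)"
    using assms finite_subset[OF assms(2,1)] by (intro sum.group) auto
  then show ?thesis unfolding cnt_deg_def by simp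
qed

lemma prod_eq_prod_cnt_deg:
  fixes q :: "nat \<Rightarrow> 'b::comm_monoid_mult"
  assumes "finite V" "S \<subseteq> V"
  shows "(\<Prod>x\<in>S. q (d x)) = (\<Prod>j\<in>d ` V. q j ^ cnt_deg S d j)"
proof -
  have "(\<Prod>j\<in>d ` V. \<Prod>x\<in>{x\<in>S. d x = j}. q (d x)) = (\<Prod>x\<in>S. q (d x))"
    using assms finite_subset[OF assms(2,1)] by (intro prod.group) auto
  moreover have "(\<Prod>x\<in>{x\<in>S. d x = j}. q (d x)) = q j ^ cnt_deg S d j" for j
    unfolding cnt_deg_def by (subst prod.cong[OF refl, of _ _ "\<lambda>_. q j"]) auto
  ultimately show ?thesis by simp
qed

section \<open>Degree-preserving relabelling\<close>

definition relabel :: "('a \<Rightarrow> 'a) \<Rightarrow> ('a \<Rightarrow> 'a set) \<Rightarrow> 'a \<Rightarrow> 'a set" where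
  "relabel \<pi> G = (\<lambda>v. \<pi> ` G (inv \<pi> v))"

lemma relabel_inv_relabel: "bij \<pi> \<Longrightarrow> relabel (inv \<pi>) (relabel \<pi> G) = G"
  unfolding relabel_def by (simp add: inv_inv_eq image_image bij_is_inj)

lemma inj_relabel: "bij \<pi> \<Longrightarrow> inj (relabel \<pi>)"
  by (rule inj_on_inverseI[where g = "relabel (inv \<pi>)"]) (rule relabel_inv_relabel)

lemma rtrancl_edges_in_relabel:
  assumes "bij \<pi>" "(u, w) \<in> (edges_in G S)\<^sup>*"
  shows "(\<pi> u, \<pi> w) \<in> (edges_in (relabel \<pi> G) (\<pi> ` S))\<^sup>*"
  using assms(2)
proof (induction rule: rtrancl_induct)
  case (step w z)
  then have "(\<pi> w, \<pi> z) \<in> edges_in (relabel \<pi> G) (\<pi> ` S)"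
    using assms(1) by (auto simp: edges_in_def relabel_def bij_is_inj)
  with step.IH show ?case by (rule rtrancl_into_rtrancl)
qed simp

lemma reaches_inside_relabel_imp:
  assumes "bij \<pi>" "reaches_inside G S B"
  shows "reaches_inside (relabel \<pi> G) (\<pi> ` S) (\<pi> ` B)"
  using assms rtrancl_edges_in_relabel[OF assms(1)] unfolding reaches_inside_def by blast

lemma reaches_inside_relabel:
  assumes "bij \<pi>"
  shows "reaches_inside (relabel \<pi> G) (\<pi> ` S) (\<pi> ` B) \<longleftrightarrow> reaches_inside G S B"
proof
  have inv_image: "inv \<pi> ` \<pi> ` X = X" for X :: "'a set"
    using assms by (simp add: image_comp bij_is_inj)
  assume "reaches_inside (relabel \<pi> G) (\<pi> ` S) (\<pi> ` B)"
  then have "reaches_inside (relabel (inv \<pi>) (relabel \<pi> G)) (inv \<pi> ` \<pi> ` S) (inv \<pi> ` \<pi> ` B)"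
    by (rule reaches_inside_relabel_imp[OF bij_imp_bij_inv[OF assms]])
  then show "reaches_inside G S B"
    unfolding inv_image relabel_inv_relabel[OF assms] .
next
  assume "reaches_inside G S B"
  then show "reaches_inside (relabel \<pi> G) (\<pi> ` S) (\<pi> ` B)"
    by (rule reaches_inside_relabel_imp[OF assms])
qed

definition out_graphs :: "'a set \<Rightarrow> ('a \<Rightarrow> nat) \<Rightarrow> ('a \<Rightarrow> 'a set) set" where
  "out_graphs V d = PiE_dflt V {} (\<lambda>v. {N. N \<subseteq> V \<and> card N = d v})"

lemma
  assumes "finite V" "\<forall>v\<in>V. d v \<le> card V"
  shows finite_out_graphs: "finite (out_graphs V d)"
    and out_graphs_nonempty: "out_graphs V d \<noteq> {}"
    and graph_pmf_eq_pmf_of_set: "graph_pmf V d = pmf_of_set (out_graphs V d)"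
proof -
  have fin: "finite {N. N \<subseteq> V \<and> card N = j}" for j
    using assms(1) by simp
  have ne: "{N. N \<subseteq> V \<and> card N = d v} \<noteq> {}" if "v \<in> V" for v
    using obtain_subset_with_card_n[of "d v" V] assms(2) that by blast
  show "finite (out_graphs V d)" "out_graphs V d \<noteq> {}"
    unfolding out_graphs_def using assms(1) fin ne by auto
  show "graph_pmf V d = pmf_of_set (out_graphs V d)"
    unfolding graph_pmf_def out_graphs_def using assms(1) fin ne by (rule Pi_pmf_of_set)
qed

lemma relabel_in_out_graphs:
  assumes "\<pi> permutes V" "\<And>v. v \<in> V \<Longrightarrow> d (\<pi> v) = d v" "G \<in> out_graphs V d"
  shows "relabel \<pi> G \<in> out_graphs V d"
proof -
  have inv: "inv \<pi> permutes V" using assms(1) by (rule permutes_inv)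
  have inj: "inj \<pi>" using assms(1) permutes_bij bij_is_inj by blast
  have "relabel \<pi> G v = {}" if "v \<notin> V" for v
    using that assms(3) inv unfolding relabel_def out_graphs_def PiE_dflt_def
    by (simp add: permutes_not_in)
  moreover have "relabel \<pi> G v \<subseteq> V \<and> card (relabel \<pi> G v) = d v" if "v \<in> V" for v
  proof -
    have v: "inv \<pi> v \<in> V" "d v = d (inv \<pi> v)"
      using that assms(2)[of "inv \<pi> v"] permutes_in_image[OF inv, of v]
        permutes_inverses(1)[OF assms(1), of v] by simp_all
    then have "G (inv \<pi> v) \<subseteq> V" "card (G (inv \<pi> v)) = d v"
      using assms(3) unfolding out_graphs_def PiE_dflt_def by auto
    then show ?thesis
      unfolding relabel_def using assms(1) inj by (auto simp: card_image inj_on_subset permutes_in_image)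
  qed
  ultimately show ?thesis unfolding out_graphs_def PiE_dflt_def by auto
qed

lemma relabel_out_graphs:
  assumes "\<pi> permutes V" "\<And>v. v \<in> V \<Longrightarrow> d (\<pi> v) = d v"
  shows "relabel \<pi> ` out_graphs V d = out_graphs V d"
proof (intro equalityI subsetI)
  fix G assume "G \<in> relabel \<pi> ` out_graphs V d"
  then show "G \<in> out_graphs V d" using relabel_in_out_graphs[of \<pi> V d] assms by blast
next
  fix G assume G: "G \<in> out_graphs V d"
  have inv: "inv \<pi> permutes V" using assms(1) by (rule permutes_inv)
  have "d (inv \<pi> v) = d v" if "v \<in> V" for v
    using assms(2)[of "inv \<pi> v"] that permutes_inverses(1)[OF assms(1)] permutes_in_image[OF inv]
    by simp
  then have G': "relabel (inv \<pi>) G \<in> out_graphs V d"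
    using relabel_in_out_graphs[of "inv \<pi>" V d G] inv G by blast
  have "relabel \<pi> (relabel (inv \<pi>) G) = G"
    using relabel_inv_relabel[of "inv \<pi>" G] assms(1)
    by (simp add: permutes_bij bij_imp_bij_inv inv_inv_eq)
  then show "G \<in> relabel \<pi> ` out_graphs V d" by (rule rev_image_eqI[OF G' sym])
qed

lemma measure_graph_pmf_relabel:
  assumes "finite V" "\<forall>v\<in>V. d v \<le> card V"
    and "\<pi> permutes V" "\<And>v. v \<in> V \<Longrightarrow> d (\<pi> v) = d v"
  shows "measure_pmf.prob (graph_pmf V d) {G. P (relabel \<pi> G)}
       = measure_pmf.prob (graph_pmf V d) {G. P G}"
proof -
  have "inj (relabel \<pi>)" using assms(3) by (intro inj_relabel permutes_bij)
  then have "map_pmf (relabel \<pi>) (graph_pmf V d) = pmf_of_set (relabel \<pi> ` out_graphs V d)"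
    unfolding graph_pmf_eq_pmf_of_set[OF assms(1,2)] using assms(1,2)
    by (intro map_pmf_of_set_inj finite_out_graphs out_graphs_nonempty) (auto intro: inj_on_subset)
  also have "\<dots> = graph_pmf V d"
    using assms by (simp add: relabel_out_graphs graph_pmf_eq_pmf_of_set)
  finally have "map_pmf (relabel \<pi>) (graph_pmf V d) = graph_pmf V d" .
  then show ?thesis
    using measure_map_pmf[of "relabel \<pi>" "graph_pmf V d" "{G. P G}"] by (simp add: vimage_def)
qed

lemma ex_bij_betw_same_fibre_card:
  assumes "finite X" "finite Y" "\<And>j. card {x\<in>X. c x = j} = card {y\<in>Y. c' y = j}"
  obtains f where "bij_betw f X Y" "\<And>x. x \<in> X \<Longrightarrow> c' (f x) = c x"
proof -
  have "\<forall>j. \<exists>f. bij_betw f {x\<in>X. c x = j} {y\<in>Y. c' y = j}"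
    using assms by (auto intro!: finite_same_card_bij)
  then obtain F where "\<forall>j. bij_betw (F j) {x\<in>X. c x = j} {y\<in>Y. c' y = j}"
    by (auto dest: choice)
  then have F: "bij_betw (F j) {x\<in>X. c x = j} {y\<in>Y. c' y = j}" for j by blast
  define f where "f x = F (c x) x" for x
  have f: "f x \<in> Y \<and> c' (f x) = c x" if "x \<in> X" for x
    using bij_betwE[OF F[of "c x"]] that unfolding f_def by blast
  have "inj_on f X"
  proof (rule inj_onI)
    fix x y assume xy: "x \<in> X" "y \<in> X" "f x = f y"
    then have "c x = c y" using f[OF xy(1)] f[OF xy(2)] by simp
    with xy show "x = y"
      using bij_betw_imp_inj_on[OF F[of "c x"]] unfolding f_def by (auto dest: inj_onD)
  qed
  moreover have "Y \<subseteq> f ` X"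
  proof
    fix y assume "y \<in> Y"
    then have "y \<in> F (c' y) ` {x\<in>X. c x = c' y}" using bij_betw_imp_surj_on[OF F] by blast
    then obtain x where "x \<in> X" "c x = c' y" "y = F (c' y) x" by blast
    then have "x \<in> X" "y = f x" unfolding f_def by simp_all
    then show "y \<in> f ` X" by blast
  qed
  ultimately have "bij_betw f X Y" using f unfolding bij_betw_def by blast
  with f that show ?thesis by blast
qed

lemma card_degree_membership_class:
  assumes "finite V" "B \<subseteq> S" "S \<subseteq> V"
  shows "card {x\<in>V. (d x, x \<in> B, x \<in> S) = (j, p, q)} =
    (if p then if q then cnt_deg B d j else 0
     else if q then cnt_deg S d j - cnt_deg B d j else cnt_deg V d j - cnt_deg S d j)"
    (is "card ?C = _")
proof -
  have "finite S" using finite_subset[OF assms(3,1)] .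
  consider "p" "q" | "p" "\<not> q" | "\<not> p" "q" | "\<not> p" "\<not> q" by blast
  then show ?thesis
  proof cases
    case 1
    then have "?C = {x\<in>B. d x = j}" using assms by auto
    then show ?thesis using 1 by (simp add: cnt_deg_def)
  next
    case 2
    then have C: "?C = {}" using assms by auto
    show ?thesis unfolding C using 2 by simp
  next
    case 3
    then have "?C = {x\<in>S - B. d x = j}" using assms by auto
    then show ?thesis using 3 cnt_deg_Diff[OF \<open>finite S\<close> assms(2)] by (simp add: cnt_deg_def)
  next
    case 4
    then have "?C = {x\<in>V - S. d x = j}" using assms by auto
    then show ?thesis using 4 cnt_deg_Diff[OF assms(1,3)] by (simp add: cnt_deg_def)
  qed
qed

lemma permutes_image_eq:
  assumes "\<pi> permutes V" "X \<subseteq> V" "Y \<subseteq> V" "\<And>x. x \<in> V \<Longrightarrow> \<pi> x \<in> Y \<longleftrightarrow> x \<in> X"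
  shows "\<pi> ` X = Y"
proof
  show "\<pi> ` X \<subseteq> Y" using assms(2,4) by blast
  show "Y \<subseteq> \<pi> ` X"
  proof
    fix y assume "y \<in> Y"
    then obtain x where "x \<in> V" "y = \<pi> x" using assms(3) permutes_image[OF assms(1)] by blast
    then show "y \<in> \<pi> ` X" using assms(4) \<open>y \<in> Y\<close> by blast
  qed
qed

lemma ex_permutes_same_cnt_deg:
  assumes "finite V" "B \<subseteq> S" "S \<subseteq> V" "B \<subseteq> S'" "S' \<subseteq> V"
    and "\<And>j. cnt_deg S' d j = cnt_deg S d j"
  obtains \<pi> where "\<pi> permutes V" "\<And>v. v \<in> V \<Longrightarrow> d (\<pi> v) = d v" "\<pi> ` S' = S" "\<pi> ` B = B"
proof -
  define c where "c T x = (d x, x \<in> B, x \<in> T)" for T x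
  have fibres: "card {x\<in>V. c S' x = i} = card {x\<in>V. c S x = i}" for i
    using card_degree_membership_class[OF assms(1,2,3)] card_degree_membership_class[OF assms(1,4,5)] assms(6)
    unfolding c_def by (cases i) auto
  obtain f where f: "bij_betw f V V" "\<And>x. x \<in> V \<Longrightarrow> c S (f x) = c S' x"
    using ex_bij_betw_same_fibre_card[OF assms(1) assms(1) fibres] by blast
  define \<pi> where "\<pi> x = (if x \<in> V then f x else x)" for x
  have "bij_betw \<pi> V V" using f(1) bij_betw_cong[of V \<pi> f V] by (simp add: \<pi>_def)
  then have \<pi>: "\<pi> permutes V" by (rule bij_imp_permutes) (simp add: \<pi>_def)
  have c: "d (\<pi> x) = d x" "\<pi> x \<in> B \<longleftrightarrow> x \<in> B" "\<pi> x \<in> S \<longleftrightarrow> x \<in> S'" if "x \<in> V" for x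
    using f(2)[OF that] that unfolding c_def \<pi>_def by auto
  have "\<pi> ` S' = S" using c(3) by (intro permutes_image_eq[OF \<pi> assms(5,3)])
  moreover have "\<pi> ` B = B" using c(2) assms by (intro permutes_image_eq[OF \<pi>]) auto
  ultimately show ?thesis using that[of \<pi>] \<pi> c(1) by blast
qed

definition profile :: "'a set \<Rightarrow> ('a \<Rightarrow> nat) \<Rightarrow> 'a set \<Rightarrow> nat \<Rightarrow> nat" where
  "profile V d S = (\<lambda>j. if j \<in> d ` V then cnt_deg S d j else 0)"

lemma R_prob_profile:
  assumes "finite V" "\<forall>v\<in>V. d v \<le> card V" "B \<subseteq> S" "S \<subseteq> V"
  shows "R_prob V d B (profile V d S) = measure_pmf.prob (graph_pmf V d) {G. reaches_inside G S B}"
proof -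
  define S' where
    "S' = (SOME S'. B \<subseteq> S' \<and> S' \<subseteq> V \<and> (\<forall>j\<in>d ` V. cnt_deg S' d j = profile V d S j))"
  have "B \<subseteq> S' \<and> S' \<subseteq> V \<and> (\<forall>j\<in>d ` V. cnt_deg S' d j = profile V d S j)"
    unfolding S'_def by (rule someI[of _ S]) (use assms in \<open>auto simp: profile_def\<close>)
  then have S': "B \<subseteq> S'" "S' \<subseteq> V" and "\<forall>j\<in>d ` V. cnt_deg S' d j = cnt_deg S d j"
    unfolding profile_def by auto
  then have "cnt_deg S' d j = cnt_deg S d j" for j
    using cnt_deg_eq_0[of j d V] assms(4) by (cases "j \<in> d ` V") auto
  then obtain \<pi> where \<pi>: "\<pi> permutes V" "\<And>v. v \<in> V \<Longrightarrow> d (\<pi> v) = d v" "\<pi> ` S' = S" "\<pi> ` B = B"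
    using ex_permutes_same_cnt_deg[OF assms(1,3,4) S'] by blast
  have "R_prob V d B (profile V d S) = measure_pmf.prob (graph_pmf V d) {G. reaches_inside G S' B}"
    unfolding R_prob_def Let_def S'_def ..
  also have "\<dots> = measure_pmf.prob (graph_pmf V d) {G. reaches_inside (relabel \<pi> G) S B}"
    using reaches_inside_relabel[OF permutes_bij[OF \<pi>(1)], of _ S' B] \<pi>(3,4) by simp
  also have "\<dots> = measure_pmf.prob (graph_pmf V d) {G. reaches_inside G S B}"
    using assms(1,2) \<pi>(1,2) by (rule measure_graph_pmf_relabel)
  finally show ?thesis .
qed

section \<open>Independence of the neighbourhoods inside and outside \<open>S\<close>\<close>

lemma measure_pair_pmf_Times:
  "measure_pmf.prob (pair_pmf M N) (A \<times> B) = measure_pmf.prob M A * measure_pmf.prob N B"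
proof -
  have "measure_pmf.prob (pair_pmf M N) (A \<times> B)
      = measure_pmf.prob (pair_pmf M N) ((A \<inter> set_pmf M) \<times> (B \<inter> set_pmf N))"
    by (subst (1 2) measure_Int_set_pmf[symmetric]) (simp add: Times_Int_Times)
  also have "\<dots> = measure_pmf.prob M (A \<inter> set_pmf M) * measure_pmf.prob N (B \<inter> set_pmf N)"
    by (rule measure_pmf_prob_product) (auto intro: countable_subset)
  also have "\<dots> = measure_pmf.prob M A * measure_pmf.prob N B" by (simp add: measure_Int_set_pmf)
  finally show ?thesis .
qed

lemma measure_subsets_card_disjoint:
  assumes "finite V" "j \<le> card V"
  shows "measure_pmf.prob (pmf_of_set {N. N \<subseteq> V \<and> card N = j}) {N. N \<inter> S = {}}
       = real (card (V - S) choose j) / real (card V choose j)"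
proof -
  have "{N. N \<subseteq> V \<and> card N = j} \<noteq> {}"
    using obtain_subset_with_card_n[OF assms(2)] by blast
  moreover have "{N. N \<subseteq> V \<and> card N = j} \<inter> {N. N \<inter> S = {}} = {N. N \<subseteq> V - S \<and> card N = j}"
    by auto
  ultimately show ?thesis using assms(1) by (simp add: measure_pmf_of_set n_subsets)
qed

lemma measure_Pi_pmf_local:
  assumes "finite A'" "A \<subseteq> A'" and local: "\<And>f g. \<forall>x\<in>A. f x = g x \<Longrightarrow> P f \<longleftrightarrow> P g"
  shows "measure_pmf.prob (Pi_pmf A dflt p) {f. P f} = measure_pmf.prob (Pi_pmf A' dflt p) {f. P f}"
proof -
  have "P (\<lambda>x. if x \<in> A then f x else dflt) \<longleftrightarrow> P f" for f by (rule local) simp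
  then show ?thesis unfolding Pi_pmf_subset[OF assms(1,2)] measure_map_pmf vimage_def by simp
qed

lemma measure_Pi_pmf_union_indep:
  assumes "finite A" "finite B" "A \<inter> B = {}"
    and P: "\<And>f g. \<forall>x\<in>A. f x = g x \<Longrightarrow> P f \<longleftrightarrow> P g"
    and Q: "\<And>f g. \<forall>x\<in>B. f x = g x \<Longrightarrow> Q f \<longleftrightarrow> Q g"
  shows "measure_pmf.prob (Pi_pmf (A \<union> B) dflt p) {f. P f \<and> Q f}
       = measure_pmf.prob (Pi_pmf A dflt p) {f. P f} * measure_pmf.prob (Pi_pmf B dflt p) {g. Q g}"
proof -
  let ?glue = "\<lambda>(f, g) x. if x \<in> A then f x else g x"
  have glue: "?glue -` {f. P f \<and> Q f} = {f. P f} \<times> {g. Q g}"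
  proof (rule set_eqI)
    fix x :: "('a \<Rightarrow> 'b) \<times> ('a \<Rightarrow> 'b)"
    obtain f g where x: "x = (f, g)" by (cases x)
    have "P (?glue (f, g)) \<longleftrightarrow> P f" by (rule P) simp
    moreover have "Q (?glue (f, g)) \<longleftrightarrow> Q g" using assms(3) by (intro Q) auto
    ultimately show "x \<in> ?glue -` {f. P f \<and> Q f} \<longleftrightarrow> x \<in> {f. P f} \<times> {g. Q g}" by (simp add: x)
  qed
  show ?thesis
    unfolding Pi_pmf_union[OF assms(1-3)] measure_map_pmf glue by (rule measure_pair_pmf_Times)
qed

lemma measure_reaches_inside_no_edges_into:
  assumes fin: "finite V" and deg: "\<forall>v\<in>V. d v \<le> card V" and SV: "S \<subseteq> V"
  shows "measure_pmf.prob (graph_pmf V d) {G. reaches_inside G S B \<and> (\<forall>w\<in>V - S. G w \<inter> S = {})}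
     = measure_pmf.prob (graph_pmf V d) {G. reaches_inside G S B}
       * (\<Prod>w\<in>V - S. real (card (V - S) choose d w) / real (card V choose d w))"
proof -
  define p where "p v = pmf_of_set {N. N \<subseteq> V \<and> card N = d v}" for v
  have fS: "finite S" "finite (V - S)" using finite_subset[OF SV fin] fin by auto
  have local_S: "reaches_inside f S B \<longleftrightarrow> reaches_inside g S B" if "\<forall>x\<in>S. f x = g x" for f g
    using that by (intro reaches_inside_cong) auto
  have "measure_pmf.prob (graph_pmf V d) {G. reaches_inside G S B \<and> (\<forall>w\<in>V - S. G w \<inter> S = {})}
      = measure_pmf.prob (Pi_pmf (S \<union> (V - S)) {} p)
          {G. reaches_inside G S B \<and> (\<forall>w\<in>V - S. G w \<inter> S = {})}"
    unfolding graph_pmf_def p_def[symmetric] using SV by (simp add: Un_absorb1)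
  also have "\<dots> = measure_pmf.prob (Pi_pmf S {} p) {G. reaches_inside G S B}
      * measure_pmf.prob (Pi_pmf (V - S) {} p) {G. \<forall>w\<in>V - S. G w \<inter> S = {}}"
    by (rule measure_Pi_pmf_union_indep) (use fS local_S in auto)
  also have "measure_pmf.prob (Pi_pmf S {} p) {G. reaches_inside G S B}
      = measure_pmf.prob (graph_pmf V d) {G. reaches_inside G S B}"
    unfolding graph_pmf_def p_def[symmetric] using fin SV local_S by (rule measure_Pi_pmf_local)
  also have "{G. \<forall>w\<in>V - S. G w \<inter> S = {}} = Pi (V - S) (\<lambda>_. {N. N \<inter> S = {}})"
    by (auto simp: Pi_def)
  also have "measure_pmf.prob (Pi_pmf (V - S) {} p) \<dots>
      = (\<Prod>w\<in>V - S. measure_pmf.prob (p w) {N. N \<inter> S = {}})"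
    by (rule measure_Pi_pmf_Pi[OF fS(2)])
  also have "\<dots> = (\<Prod>w\<in>V - S. real (card (V - S) choose d w) / real (card V choose d w))"
    unfolding p_def using fin deg by (intro prod.cong refl measure_subsets_card_disjoint) auto
  finally show ?thesis .
qed

lemma measure_rev_reach_eq:
  assumes "finite V" "\<forall>v\<in>V. d v \<le> card V" "B \<subseteq> S" "S \<subseteq> V"
  shows "measure_pmf.prob (graph_pmf V d) {G. rev_reach G V B = S}
     = R_prob V d B (profile V d S) * (\<Prod>j\<in>d ` V.
         (real ((card V - card S) choose j) / real (card V choose j)) ^ (cnt_deg V d j - cnt_deg S d j))"
proof -
  define q where "q j = real ((card V - card S) choose j) / real (card V choose j)" for j
  have "card (V - S) = card V - card S" using assms(1,4) by (simp add: card_Diff_subset finite_subset)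
  then have "(\<Prod>w\<in>V - S. real (card (V - S) choose d w) / real (card V choose d w))
      = (\<Prod>w\<in>V - S. q (d w))"
    by (simp add: q_def)
  also have "\<dots> = (\<Prod>j\<in>d ` V. q j ^ cnt_deg (V - S) d j)"
    by (rule prod_eq_prod_cnt_deg[OF assms(1)]) auto
  also have "\<dots> = (\<Prod>j\<in>d ` V. q j ^ (cnt_deg V d j - cnt_deg S d j))"
    using cnt_deg_Diff[OF assms(1,4)] by simp
  finally have prod: "(\<Prod>w\<in>V - S. real (card (V - S) choose d w) / real (card V choose d w))
      = (\<Prod>j\<in>d ` V. q j ^ (cnt_deg V d j - cnt_deg S d j))" .
  have "{G. rev_reach G V B = S} = {G. reaches_inside G S B \<and> (\<forall>w\<in>V - S. G w \<inter> S = {})}"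
    using rev_reach_eq_iff[OF assms(3,4)] by blast
  then show ?thesis
    using measure_reaches_inside_no_edges_into[OF assms(1,2,4), of B] R_prob_profile[OF assms] prod
    unfolding q_def by simp
qed

section \<open>Counting sets and degree profiles\<close>

lemma bij_betw_fibres:
  assumes "d ` X \<subseteq> J"
  shows "bij_betw (\<lambda>T. restrict (\<lambda>j. {x\<in>T. d x = j}) J)
     {T. T \<subseteq> X \<and> (\<forall>j\<in>J. cnt_deg T d j = m j)}
     (PiE J (\<lambda>j. {Y. Y \<subseteq> {x\<in>X. d x = j} \<and> card Y = m j}))"
    (is "bij_betw ?f ?T ?P")
proof (rule bij_betw_byWitness[where f' = "\<lambda>Q. \<Union>j\<in>J. Q j"])
  have fibre_Union: "{x \<in> (\<Union>i\<in>J. Q i). d x = j} = Q j" if "Q \<in> ?P" "j \<in> J" for Q j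
    using that by (auto simp: PiE_def Pi_def)
  show "\<forall>T\<in>?T. (\<Union>j\<in>J. ?f T j) = T" using assms by auto
  show "\<forall>Q\<in>?P. ?f (\<Union>j\<in>J. Q j) = Q"
  proof
    fix Q assume Q: "Q \<in> ?P"
    show "?f (\<Union>j\<in>J. Q j) = Q"
    proof
      fix j show "?f (\<Union>j\<in>J. Q j) j = Q j"
        using fibre_Union[OF Q] Q by (cases "j \<in> J") (auto simp: PiE_def extensional_def)
    qed
  qed
  show "?f ` ?T \<subseteq> ?P" unfolding cnt_deg_def by auto
  show "(\<lambda>Q. \<Union>j\<in>J. Q j) ` ?P \<subseteq> ?T"
  proof
    fix T assume "T \<in> (\<lambda>Q. \<Union>j\<in>J. Q j) ` ?P"
    then obtain Q where Q: "Q \<in> ?P" and T: "T = (\<Union>j\<in>J. Q j)" by blast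
    have "T \<subseteq> X" using Q unfolding T by auto
    moreover have "cnt_deg T d j = m j" if "j \<in> J" for j
      using fibre_Union[OF Q that] Q that unfolding T cnt_deg_def by auto
    ultimately show "T \<in> ?T" by blast
  qed
qed

lemma card_subsets_with_cnt_deg:
  assumes "finite X" "finite J" "d ` X \<subseteq> J"
  shows "card {T. T \<subseteq> X \<and> (\<forall>j\<in>J. cnt_deg T d j = m j)} = (\<Prod>j\<in>J. cnt_deg X d j choose m j)"
proof -
  have "card {T. T \<subseteq> X \<and> (\<forall>j\<in>J. cnt_deg T d j = m j)}
      = card (PiE J (\<lambda>j. {Y. Y \<subseteq> {x\<in>X. d x = j} \<and> card Y = m j}))"
    using bij_betw_fibres[OF assms(3)] by (rule bij_betw_same_card)
  also have "\<dots> = (\<Prod>j\<in>J. cnt_deg X d j choose m j)"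
    using assms(1,2) by (simp add: card_PiE n_subsets cnt_deg_def)
  finally show ?thesis .
qed

lemma card_eq_sum_profile:
  assumes "finite V" "S \<subseteq> V"
  shows "card S = sum (profile V d S) (d ` V)"
  unfolding card_eq_sum_cnt_deg[OF assms, of d] profile_def by simp

lemma profile_in_tuples:
  assumes "finite V" "B \<subseteq> S" "S \<subseteq> V" "card S = k"
  shows "profile V d S \<in> tuples V d B k"
proof -
  have "finite S" using assms(1,3) by (rule finite_subset[rotated])
  then have "cnt_deg B d j \<le> cnt_deg S d j" "cnt_deg S d j \<le> cnt_deg V d j" for j
    using assms(1-3) by (simp_all add: cnt_deg_mono)
  moreover have "sum (profile V d S) (d ` V) = k"
    using card_eq_sum_profile[OF assms(1,3)] assms(4) by simp
  ultimately show ?thesis unfolding tuples_def by (simp add: profile_def)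
qed

lemma profile_eq_tuple_iff:
  assumes "kk \<in> tuples V d B k"
  shows "profile V d S = kk \<longleftrightarrow> (\<forall>j\<in>d ` V. cnt_deg S d j = kk j)"
proof
  show "\<forall>j\<in>d ` V. cnt_deg S d j = kk j" if "profile V d S = kk"
  proof
    fix j assume "j \<in> d ` V"
    then show "cnt_deg S d j = kk j" using fun_cong[OF that, of j] by (simp add: profile_def)
  qed
  show "profile V d S = kk" if "\<forall>j\<in>d ` V. cnt_deg S d j = kk j"
  proof
    fix j show "profile V d S j = kk j"
      using that assms unfolding profile_def tuples_def by (cases "j \<in> d ` V") auto
  qed
qed

lemma card_sets_with_profile:
  assumes "finite V" "B \<subseteq> V" "kk \<in> tuples V d B k"
  shows "card {S. B \<subseteq> S \<and> S \<subseteq> V \<and> profile V d S = kk}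
       = (\<Prod>j\<in>d ` V. (cnt_deg V d j - cnt_deg B d j) choose (kk j - cnt_deg B d j))"
proof -
  define F where "F = {S. B \<subseteq> S \<and> S \<subseteq> V \<and> profile V d S = kk}"
  define T where "T = {T. T \<subseteq> V - B \<and> (\<forall>j\<in>d ` V. cnt_deg T d j = kk j - cnt_deg B d j)}"
  have in_F: "S \<in> F \<longleftrightarrow> B \<subseteq> S \<and> S \<subseteq> V \<and> S - B \<in> T" for S
  proof -
    have "cnt_deg S d j = kk j \<longleftrightarrow> cnt_deg (S - B) d j = kk j - cnt_deg B d j"
      if "B \<subseteq> S" "S \<subseteq> V" "j \<in> d ` V" for j
    proof -
      have "finite S" using assms(1) that(2) by (rule finite_subset[rotated])
      moreover have "cnt_deg B d j \<le> kk j" using assms(3) that(3) unfolding tuples_def by blast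
      ultimately show ?thesis
        using cnt_deg_Diff[of S B d j] cnt_deg_mono[of S B d j] that(1) by linarith
    qed
    then show ?thesis
      unfolding F_def T_def profile_eq_tuple_iff[OF assms(3)] by blast
  qed
  have "bij_betw (\<lambda>S. S - B) F T"
  proof (rule bij_betw_byWitness[where f' = "\<lambda>T. B \<union> T"])
    show "\<forall>S\<in>F. B \<union> (S - B) = S" unfolding F_def by blast
    show "\<forall>X\<in>T. B \<union> X - B = X" unfolding T_def by blast
    show "(\<lambda>S. S - B) ` F \<subseteq> T" using in_F by blast
    show "(\<lambda>X. B \<union> X) ` T \<subseteq> F"
    proof
      fix S assume "S \<in> (\<lambda>X. B \<union> X) ` T"
      then obtain X where "X \<in> T" "S = B \<union> X" by blast
      moreover have "B \<union> X - B = X" "X \<subseteq> V" using \<open>X \<in> T\<close> unfolding T_def by blast+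
      ultimately show "S \<in> F" using in_F assms(2) by simp
    qed
  qed
  then have "card F = card T" by (rule bij_betw_same_card)
  also have "\<dots> = (\<Prod>j\<in>d ` V. cnt_deg (V - B) d j choose (kk j - cnt_deg B d j))"
    unfolding T_def using assms(1) by (intro card_subsets_with_cnt_deg) auto
  finally show ?thesis unfolding F_def using cnt_deg_Diff[OF assms(1,2)] by simp
qed

lemma finite_tuples:
  assumes "finite V"
  shows "finite (tuples V d B k)"
proof (rule finite_subset)
  show "tuples V d B k \<subseteq> PiE_dflt (d ` V) 0 (\<lambda>j. {0..cnt_deg V d j})"
    unfolding tuples_def PiE_dflt_def by auto
  show "finite (PiE_dflt (d ` V) 0 (\<lambda>j. {0..cnt_deg V d j}))" using assms by auto
qed

lemma inj_on_tuples_upd: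
  assumes "finite V" "j0 \<in> d ` V"
  shows "inj_on (\<lambda>kk. kk(j0 := 0)) (tuples V d B k)"
proof (rule inj_onI)
  fix kk kk' assume kk: "kk \<in> tuples V d B k" "kk' \<in> tuples V d B k"
    and eq: "kk(j0 := 0) = kk'(j0 := 0)"
  have off: "kk j = kk' j" if "j \<noteq> j0" for j using fun_cong[OF eq, of j] that by simp
  then have "sum kk (d ` V - {j0}) = sum kk' (d ` V - {j0})" by (intro sum.cong) auto
  moreover have "sum kk (d ` V) = sum kk' (d ` V)" using kk unfolding tuples_def by auto
  ultimately have "kk j0 = kk' j0" using assms by (simp add: sum.remove)
  then have "kk j = kk' j" for j using off by (cases "j = j0") auto
  then show "kk = kk'" by (rule ext)
qed

lemma card_tuples_le:
  assumes fin: "finite V"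
  shows "card (tuples V d B k) \<le> card V ^ card (d ` V)"
proof (cases "V = {}")
  case True
  then have "tuples V d B k \<subseteq> {\<lambda>_. 0}" unfolding tuples_def by (auto simp: fun_eq_iff)
  then have "card (tuples V d B k) \<le> card {\<lambda>_ :: nat. 0 :: nat}" by (intro card_mono) auto
  with True show ?thesis by simp
next
  case False
  then obtain j0 where j0: "j0 \<in> d ` V" by blast
  define P where "P = PiE_dflt (d ` V) 0 (\<lambda>j. if j = j0 then {0} else {0..cnt_deg V d j})"
  have "card (tuples V d B k) = card ((\<lambda>kk. kk(j0 := 0)) ` tuples V d B k)"
    using inj_on_tuples_upd[OF fin j0] by (simp add: card_image)
  also have "\<dots> \<le> card P"
  proof (rule card_mono)
    show "finite P" unfolding P_def using fin by auto
    show "(\<lambda>kk. kk(j0 := 0)) ` tuples V d B k \<subseteq> P" unfolding P_def PiE_dflt_def tuples_def by auto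
  qed
  also have "\<dots> = (\<Prod>j\<in>d ` V. card (if j = j0 then {0} else {0..cnt_deg V d j}))"
    unfolding P_def using fin by (intro card_PiE_dflt) auto
  also have "\<dots> \<le> (\<Prod>j\<in>d ` V. card V)"
  proof (intro prod_mono conjI)
    fix j
    have "0 < card V" using False fin by (simp add: card_gt_0_iff)
    moreover have "0 < cnt_deg V d j0" unfolding cnt_deg_def using j0 fin by (auto simp: card_gt_0_iff)
    ultimately show "card (if j = j0 then {0} else {0..cnt_deg V d j}) \<le> card V"
      using cnt_deg_add_le_card[OF fin, of j j0 d] by auto
  qed simp
  finally show ?thesis by simp
qed

lemma a_coef_eq:
  assumes "kk \<in> tuples V d B k"
  shows "a_coef V d B kk
     = real (\<Prod>j\<in>d ` V. (cnt_deg V d j - cnt_deg B d j) choose (kk j - cnt_deg B d j))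
       * (R_prob V d B kk * (\<Prod>j\<in>d ` V.
           (real ((card V - k) choose j) / real (card V choose j)) ^ (cnt_deg V d j - kk j)))"
proof -
  have "sum kk (d ` V) = k" using assms unfolding tuples_def by auto
  moreover have "(if a = b then 1 else x ^ (a - b)) = x ^ (a - b)" for a b :: nat and x :: real
    by simp
  ultimately have "a_coef V d B kk = (\<Prod>j\<in>d ` V.
      real ((cnt_deg V d j - cnt_deg B d j) choose (kk j - cnt_deg B d j))
      * (real ((card V - k) choose j) / real (card V choose j)) ^ (cnt_deg V d j - kk j))
      * R_prob V d B kk"
    unfolding a_coef_def Let_def by simp
  then show ?thesis by (simp add: prod.distrib)
qed

section \<open>The size of the reverse reachable set\<close>

lemma measure_card_rev_reach_eq_alpha:
  assumes fin: "finite V" and BV: "B \<subseteq> V" and deg: "\<forall>v\<in>V. d v \<le> card V"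
  shows "measure_pmf.prob (graph_pmf V d) {G. card (rev_reach G V B) = k} = alpha V d B k"
proof -
  define Sk where "Sk = {S. B \<subseteq> S \<and> S \<subseteq> V \<and> card S = k}"
  define c where "c kk = R_prob V d B kk * (\<Prod>j\<in>d ` V.
      (real ((card V - k) choose j) / real (card V choose j)) ^ (cnt_deg V d j - kk j))" for kk
  have fSk: "finite Sk" unfolding Sk_def by (rule finite_subset[of _ "Pow V"]) (auto simp: fin)
  have "measure_pmf.prob (graph_pmf V d) {G. card (rev_reach G V B) = k}
      = (\<Sum>S\<in>Sk. measure_pmf.prob (graph_pmf V d) {G. rev_reach G V B = S})"
    unfolding Sk_def by (rule measure_card_rev_reach_eq_sum[OF fin BV])
  also have "\<dots> = (\<Sum>S\<in>Sk. c (profile V d S))"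
  proof (rule sum.cong[OF refl])
    fix S assume "S \<in> Sk"
    then have S: "B \<subseteq> S" "S \<subseteq> V" "card S = k" unfolding Sk_def by auto
    show "measure_pmf.prob (graph_pmf V d) {G. rev_reach G V B = S} = c (profile V d S)"
      unfolding measure_rev_reach_eq[OF fin deg S(1,2)] c_def S(3) by (simp add: profile_def)
  qed
  also have "\<dots> = (\<Sum>kk\<in>tuples V d B k. \<Sum>S\<in>{S\<in>Sk. profile V d S = kk}. c (profile V d S))"
    using fSk finite_tuples[OF fin] profile_in_tuples[OF fin] unfolding Sk_def
    by (intro sum.group[symmetric]) auto
  also have "\<dots> = (\<Sum>kk\<in>tuples V d B k. a_coef V d B kk)"
  proof (rule sum.cong[OF refl])
    fix kk assume kk: "kk \<in> tuples V d B k"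
    have "sum kk (d ` V) = k" using kk unfolding tuples_def by blast
    then have "{S\<in>Sk. profile V d S = kk} = {S. B \<subseteq> S \<and> S \<subseteq> V \<and> profile V d S = kk}"
      using card_eq_sum_profile[OF fin] unfolding Sk_def by auto
    then have "(\<Sum>S\<in>{S\<in>Sk. profile V d S = kk}. c (profile V d S))
        = real (card {S. B \<subseteq> S \<and> S \<subseteq> V \<and> profile V d S = kk}) * c kk"
      by simp
    then show "(\<Sum>S\<in>{S\<in>Sk. profile V d S = kk}. c (profile V d S)) = a_coef V d B kk"
      unfolding card_sets_with_profile[OF fin BV kk] a_coef_eq[OF kk] c_def .
  qed
  finally show ?thesis unfolding alpha_def .
qed

lemma alpha_le_Max:
  assumes "finite V" "B \<subseteq> V" "card B \<le> k" "k \<le> card V"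
  shows "alpha V d B k \<le> real (card V) ^ card (d ` V) * Max (a_coef V d B ` tuples V d B k)"
proof -
  \<comment> \<open>the bounds on \<open>k\<close> make the set of tuples nonempty, so \<open>Max\<close> is not the junk \<open>Max {}\<close>\<close>
  obtain S where "B \<subseteq> S" "S \<subseteq> V" "card S = k"
    using exists_subset_between[OF assms(3,4,2,1)] by blast
  then have ne: "profile V d S \<in> tuples V d B k" by (rule profile_in_tuples[OF assms(1)])
  have le_Max: "a_coef V d B kk \<le> Max (a_coef V d B ` tuples V d B k)" if "kk \<in> tuples V d B k" for kk
    using finite_tuples[OF assms(1)] that by (intro Max_ge) auto
  have "0 \<le> a_coef V d B kk" for kk
    unfolding a_coef_def Let_def R_prob_def by (intro mult_nonneg_nonneg prod_nonneg) auto
  then have Max_nonneg: "0 \<le> Max (a_coef V d B ` tuples V d B k)"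
    using le_Max[OF ne] by (meson order_trans)
  have "alpha V d B k \<le> real (card (tuples V d B k)) * Max (a_coef V d B ` tuples V d B k)"
    unfolding alpha_def using le_Max by (rule sum_bounded_above)
  also have "\<dots> \<le> real (card V) ^ card (d ` V) * Max (a_coef V d B ` tuples V d B k)"
    using card_tuples_le[OF assms(1), of d B k] Max_nonneg
    by (intro mult_right_mono) (simp_all flip: of_nat_power)
  finally show ?thesis .
qed

theorem lemma3:
  fixes V B :: "'a set" and d :: "'a \<Rightarrow> nat" and k :: nat
  assumes "finite V" and "B \<subseteq> V"
    and "\<forall>v\<in>V. 1 \<le> d v \<and> d v \<le> card V"
    and "card B \<le> k" and "k \<le> card V"
  shows "measure_pmf.prob (graph_pmf V d) {G. card (rev_reach G V B) = k} = alpha V d B k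
       \<and> alpha V d B k \<le> real (card V) ^ card (d ` V) * Max (a_coef V d B ` tuples V d B k)"
proof -
  \<comment> \<open>only the upper degree bound is needed; it makes each neighbourhood distribution well defined\<close>
  have "\<forall>v\<in>V. d v \<le> card V" using assms(3) by blast
  then show ?thesis
    using measure_card_rev_reach_eq_alpha[OF assms(1,2)] alpha_le_Max[OF assms(1,2,4,5)] by blast
qed

end
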